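(* Let $K$ be a field of characteristic zero and $W_n$ the Witt Lie algebra. Let $a$ be a nonzero locally finite element of $W_n$. Then for every $\lambda\in\mathbb{Z}^n$ the elements $l^+_\lambda(a)$ and $l^-_\lambda(a)$ are locally finite.
   Context: $W_n=\mathrm{Der}_K(K[x_1^{\pm1},\ldots,x_n^{\pm1}])=\bigoplus_{\alpha\in\mathbb{Z}^n}x^\alpha\mathcal{H}_n$, where $x^\alpha=x_1^{\alpha_1}\cdots x_n^{\alpha_n}$, $\mathcal{H}_n=\bigoplus_{i=1}^nKH_i$, $H_i=x_i\partial_i$. An element $a$ of a Lie algebra $\mathcal{G}$ is locally finite if $\dim_K\sum_{i\ge0}K\,\mathrm{ad}(a)^i(b)<\infty$ for all $b\in\mathcal{G}$. For $\lambda\in\mathbb{Z}^n$, the $(\mathbb{Z},\lambda)$-grading is $W_n=\bigoplus_{i\in\mathbb{Z}}W_{n,i}(\lambda)$ with $W_{n,i}(\lambda)=\bigoplus_{\alpha:\sum_j\lambda_j\alpha_j=i}x^\alpha\mathcal{H}_n$ (it is a Lie algebra grading). Writing $a=a_{i_1}+\cdots+a_{i_s}$ with $0\ne a_{i_\nu}\in W_{n,i_\nu}(\lambda)$ and $i_1<\cdots<i_s$, set $l^+_\lambda(a)=a_{i_s}$ (leading term) and $l^-_\lambda(a)=a_{i_1}$ (least term). *)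

theory Defs
  imports Main
begin

text \<open>The index set {1..n} is a finite type 'n.
  An element  a = sum_alpha x^alpha (sum_i a(alpha)(i) H_i)  is represented by its coefficient
  function  a :: ('n => int) => 'n => 'k  with finite support in alpha.\<close>

type_synonym ('n, 'k) witt = "('n \<Rightarrow> int) \<Rightarrow> 'n \<Rightarrow> 'k"

definition supp :: "('n, 'k::zero) witt \<Rightarrow> ('n \<Rightarrow> int) set" where
  "supp a = {\<alpha>. a \<alpha> \<noteq> (\<lambda>_. 0)}"

definition Witt :: "('n::finite, 'k::field) witt set" where
  "Witt = {a. finite (supp a)}"

text \<open>Lie bracket, determined by
  [x^alpha H_i, x^beta H_j] = x^(alpha+beta) (beta_i H_j - alpha_j H_i).\<close>
definition witt_bracket :: "('n::finite, 'k::field) witt \<Rightarrow> ('n, 'k) witt \<Rightarrow> ('n, 'k) witt" where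
  "witt_bracket a b = (\<lambda>\<gamma> k. \<Sum>\<alpha>\<in>supp a.
      (\<Sum>i\<in>UNIV. a \<alpha> i * of_int ((\<gamma> - \<alpha>) i)) * b (\<gamma> - \<alpha>) k
    - (\<Sum>j\<in>UNIV. b (\<gamma> - \<alpha>) j * of_int (\<alpha> j)) * a \<alpha> k)"

definition lin_comb :: "('n, 'k::field) witt set \<Rightarrow> (('n, 'k) witt \<Rightarrow> 'k) \<Rightarrow> ('n, 'k) witt" where
  "lin_comb S c = (\<lambda>\<alpha> k. \<Sum>s\<in>S. c s * s \<alpha> k)"

definition span_fin_dim :: "('n, 'k::field) witt set \<Rightarrow> bool" where
  "span_fin_dim V \<longleftrightarrow> (\<exists>S. finite S \<and> V \<subseteq> {lin_comb S c | c. True})"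

definition locally_finite :: "('n::finite, 'k::field) witt \<Rightarrow> bool" where
  "locally_finite a \<longleftrightarrow>
     (\<forall>b\<in>Witt. span_fin_dim (range (\<lambda>i. (witt_bracket a ^^ i) b)))"

definition lam_deg :: "('n::finite \<Rightarrow> int) \<Rightarrow> ('n \<Rightarrow> int) \<Rightarrow> int" where
  "lam_deg lam \<alpha> = (\<Sum>j\<in>UNIV. lam j * \<alpha> j)"

definition grade_comp :: "('n::finite \<Rightarrow> int) \<Rightarrow> int \<Rightarrow> ('n, 'k::field) witt \<Rightarrow> ('n, 'k) witt" where
  "grade_comp lam i a = (\<lambda>\<alpha>. if lam_deg lam \<alpha> = i then a \<alpha> else (\<lambda>_. 0))"

definition lead_term :: "('n::finite \<Rightarrow> int) \<Rightarrow> ('n, 'k::field) witt \<Rightarrow> ('n, 'k) witt" where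
  "lead_term lam a = grade_comp lam (Max (lam_deg lam ` supp a)) a"

definition least_term :: "('n::finite \<Rightarrow> int) \<Rightarrow> ('n, 'k::field) witt \<Rightarrow> ('n, 'k) witt" where
  "least_term lam a = grade_comp lam (Min (lam_deg lam ` supp a)) a"

end

theory Submission
  imports Defs "HOL-Library.Function_Algebras" "HOL.Vector_Spaces"
begin

text \<open>The \<open>(\<int>,\<lambda>)\<close>-grading is a Lie algebra grading. If every component of \<open>a\<close> has degree at
  most \<open>s\<close> and \<open>a\<^sub>s\<close> is its degree-\<open>s\<close> component, then for \<open>b\<close> homogeneous of degree \<open>d\<close> the
  element \<open>ad(a\<^sub>s)\<^sup>m b\<close> is exactly the degree-\<open>(d + m s)\<close> component of \<open>ad(a)\<^sup>m b\<close>, since every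
  other product of components lands in lower degree. The orbit of \<open>b\<close> under \<open>ad(a)\<close> spans a
  finite-dimensional space of finitely supported elements, so the graded components of all its
  vectors lie in the span of finitely many elements; splitting an arbitrary \<open>b\<close> into homogeneous
  components gives local finiteness of \<open>a\<^sub>s = l\<^sup>+\<^sub>\<lambda>(a)\<close>. The least term is the leading term
  for \<open>-\<lambda>\<close>. The argument works over any field.\<close>

definition wscale :: "'k::field \<Rightarrow> ('n, 'k) witt \<Rightarrow> ('n, 'k) witt" where
  "wscale c f = (\<lambda>\<alpha> k. c * f \<alpha> k)"

interpretation W: vector_space wscale
  by unfold_locales (auto simp: wscale_def fun_eq_iff algebra_simps)

lemma sum_fun_apply: "(\<Sum>i\<in>I. f i) x = (\<Sum>i\<in>I. f i x)"
  by (induction I rule: infinite_finite_induct) auto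

lemma lin_comb_eq_sum_wscale: "lin_comb S c = (\<Sum>v\<in>S. wscale (c v) v)"
  unfolding lin_comb_def wscale_def by (auto simp: fun_eq_iff sum_fun_apply)

lemma lin_combs_eq_span: "finite S \<Longrightarrow> {lin_comb S c | c. True} = W.span S"
  unfolding W.span_finite lin_comb_eq_sum_wscale by blast

lemma span_fin_dim_iff: "span_fin_dim V \<longleftrightarrow> (\<exists>S. finite S \<and> V \<subseteq> W.span S)"
proof -
  have "finite S \<and> V \<subseteq> {lin_comb S c | c. True} \<longleftrightarrow> finite S \<and> V \<subseteq> W.span S" for S
    using lin_combs_eq_span[of S] by auto
  then show ?thesis unfolding span_fin_dim_def by (simp only:)
qed

lemma span_fin_dim_obtain_spanning_subset:
  assumes "span_fin_dim V"
  obtains B where "finite B" "B \<subseteq> V" "V \<subseteq> W.span B"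
proof -
  obtain S where S: "finite S" "V \<subseteq> W.span S" using assms by (auto simp: span_fin_dim_iff)
  obtain B where B: "B \<subseteq> V" "W.independent B" "V \<subseteq> W.span B"
    using W.maximal_independent_subset by blast
  have "finite B" using W.independent_span_bound[OF S(1) B(2)] B(1) S(2) by blast
  with B that show ?thesis by blast
qed

lemma linear_funpow:
  fixes f :: "('n, 'k::field) witt \<Rightarrow> ('n, 'k) witt"
  assumes "Vector_Spaces.linear wscale wscale f"
  shows "Vector_Spaces.linear wscale wscale (f ^^ m)"
proof (induction m)
  case 0 show ?case unfolding funpow.simps(1) by (rule W.linear_id)
next
  case (Suc m) show ?case
    unfolding funpow.simps(2) by (rule Vector_Spaces.linear_compose[OF Suc assms])
qed

lemma lam_deg_diff: "lam_deg lam (\<gamma> - \<alpha>) = lam_deg lam \<gamma> - lam_deg lam \<alpha>"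
  unfolding lam_deg_def by (simp add: right_diff_distrib sum_subtractf)

lemma lam_deg_uminus: "lam_deg (- lam) \<gamma> = - lam_deg lam \<gamma>"
  unfolding lam_deg_def by (simp add: sum_negf)

definition deg_le :: "('n::finite \<Rightarrow> int) \<Rightarrow> int \<Rightarrow> ('n, 'k::field) witt \<Rightarrow> bool" where
  "deg_le lam t x \<longleftrightarrow> (\<forall>\<gamma>. t < lam_deg lam \<gamma> \<longrightarrow> x \<gamma> = (\<lambda>_. 0))"

definition deg_ge :: "('n::finite \<Rightarrow> int) \<Rightarrow> int \<Rightarrow> ('n, 'k::field) witt \<Rightarrow> bool" where
  "deg_ge lam t x \<longleftrightarrow> (\<forall>\<gamma>. lam_deg lam \<gamma> < t \<longrightarrow> x \<gamma> = (\<lambda>_. 0))"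

lemma deg_le_supp:
  assumes "deg_le lam s a" "\<alpha> \<in> supp a"
  shows "lam_deg lam \<alpha> \<le> s"
proof (rule ccontr)
  assume "\<not> lam_deg lam \<alpha> \<le> s"
  then have "a \<alpha> = (\<lambda>_. 0)" using assms(1) unfolding deg_le_def by simp
  with assms(2) show False unfolding supp_def by simp
qed

lemma deg_ge_supp:
  assumes "deg_ge lam s a" "\<alpha> \<in> supp a"
  shows "s \<le> lam_deg lam \<alpha>"
proof (rule ccontr)
  assume "\<not> s \<le> lam_deg lam \<alpha>"
  then have "a \<alpha> = (\<lambda>_. 0)" using assms(1) unfolding deg_ge_def by simp
  with assms(2) show False unfolding supp_def by simp
qed

lemma deg_le_grade_comp: "deg_le lam t (grade_comp lam t x)"
  unfolding deg_le_def grade_comp_def by auto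

lemma deg_ge_grade_comp: "deg_ge lam t (grade_comp lam t x)"
  unfolding deg_ge_def grade_comp_def by auto

lemma grade_comp_idem: "grade_comp lam t (grade_comp lam t x) = grade_comp lam t x"
  unfolding grade_comp_def by auto

lemma supp_grade_comp_subset: "supp (grade_comp lam t x) \<subseteq> supp x"
  unfolding supp_def grade_comp_def by auto

lemma grade_comp_Witt: "x \<in> Witt \<Longrightarrow> grade_comp lam t x \<in> Witt"
  unfolding Witt_def by (auto intro: finite_subset[OF supp_grade_comp_subset])

lemma grade_comp_eq_zero: "t \<notin> lam_deg lam ` supp x \<Longrightarrow> grade_comp lam t x = 0"
  unfolding grade_comp_def supp_def zero_fun_def by (rule ext) auto

lemma grade_comp_eq_self:
  "deg_le lam t x \<Longrightarrow> deg_ge lam t x \<Longrightarrow> grade_comp lam t x = x"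
  unfolding deg_le_def deg_ge_def grade_comp_def by (force simp: fun_eq_iff)

lemma sum_grade_comp:
  assumes "x \<in> Witt"
  shows "(\<Sum>t\<in>lam_deg lam ` supp x. grade_comp lam t x) = x"
proof (rule ext)
  fix \<gamma>
  have fin: "finite (lam_deg lam ` supp x)" using assms unfolding Witt_def by simp
  have "(\<Sum>t\<in>lam_deg lam ` supp x. grade_comp lam t x) \<gamma>
      = (\<Sum>t\<in>lam_deg lam ` supp x. if lam_deg lam \<gamma> = t then x \<gamma> else 0)"
    unfolding grade_comp_def zero_fun_def[symmetric] by (rule sum_fun_apply)
  also have "\<dots> = (if lam_deg lam \<gamma> \<in> lam_deg lam ` supp x then x \<gamma> else 0)"
    by (rule sum.delta'[OF fin])
  also have "\<dots> = x \<gamma>" unfolding supp_def by (auto simp: zero_fun_def)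
  finally show "(\<Sum>t\<in>lam_deg lam ` supp x. grade_comp lam t x) \<gamma> = x \<gamma>" .
qed

lemma linear_grade_comp: "Vector_Spaces.linear wscale wscale (grade_comp lam t)"
  unfolding linear_iff using W.vector_space_axioms
  by (auto simp: grade_comp_def wscale_def fun_eq_iff)

lemma grade_comps_in_finite_span:
  assumes "finite B" "B \<subseteq> Witt"
  obtains T where "finite T" "\<And>t v. v \<in> W.span B \<Longrightarrow> grade_comp lam t v \<in> W.span T"
proof
  define T where "T = (\<Union>w\<in>B. (\<lambda>t. grade_comp lam t w) ` lam_deg lam ` supp w)"
  show "finite T" using assms unfolding T_def Witt_def by (intro finite_UN_I finite_imageI) auto
  fix t v assume "v \<in> W.span B"
  then have "grade_comp lam t v \<in> W.span (grade_comp lam t ` B)"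
    unfolding module_hom.span_image[OF linear_grade_comp[unfolded linear_iff_module_hom]]
    by (rule imageI)
  also have "\<dots> \<subseteq> W.span T"
  proof (rule W.span_minimal[OF _ W.subspace_span])
    show "grade_comp lam t ` B \<subseteq> W.span T"
    proof
      fix u assume "u \<in> grade_comp lam t ` B"
      then obtain w where "w \<in> B" "u = grade_comp lam t w" by blast
      show "u \<in> W.span T"
      proof (cases "t \<in> lam_deg lam ` supp w")
        case True
        then have "u \<in> T" unfolding T_def using \<open>w \<in> B\<close> \<open>u = grade_comp lam t w\<close> by blast
        then show ?thesis by (rule W.span_base)
      next
        case False
        show ?thesis unfolding \<open>u = grade_comp lam t w\<close> grade_comp_eq_zero[OF False]
          by (rule W.span_zero)
      qed
    qed
  qed
  finally show "grade_comp lam t v \<in> W.span T" .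
qed

definition bracket_term ::
    "('n::finite, 'k::field) witt \<Rightarrow> ('n, 'k) witt \<Rightarrow> ('n \<Rightarrow> int) \<Rightarrow> 'n \<Rightarrow> ('n \<Rightarrow> int) \<Rightarrow> 'k"
  where
  "bracket_term a b \<gamma> k \<alpha> = (\<Sum>i\<in>UNIV. a \<alpha> i * of_int ((\<gamma> - \<alpha>) i)) * b (\<gamma> - \<alpha>) k
    - (\<Sum>j\<in>UNIV. b (\<gamma> - \<alpha>) j * of_int (\<alpha> j)) * a \<alpha> k"

lemma bracket_term_left_zero: "a \<alpha> = (\<lambda>_. 0) \<Longrightarrow> bracket_term a b \<gamma> k \<alpha> = 0"
  unfolding bracket_term_def by simp

lemma bracket_term_right_zero: "b (\<gamma> - \<alpha>) = (\<lambda>_. 0) \<Longrightarrow> bracket_term a b \<gamma> k \<alpha> = 0"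
  unfolding bracket_term_def by simp

lemma witt_bracket_eq_sum:
  assumes "finite F" "supp a \<subseteq> F"
  shows "witt_bracket a b \<gamma> k = (\<Sum>\<alpha>\<in>F. bracket_term a b \<gamma> k \<alpha>)"
  unfolding witt_bracket_def bracket_term_def[symmetric]
  by (rule sum.mono_neutral_left) (use assms in \<open>auto simp: supp_def intro: bracket_term_left_zero\<close>)

lemma bracket_term_add:
  "bracket_term a (x + y) \<gamma> k \<alpha> = bracket_term a x \<gamma> k \<alpha> + bracket_term a y \<gamma> k \<alpha>"
  unfolding bracket_term_def plus_fun_apply by (simp add: sum.distrib ring_distribs)

lemma bracket_term_wscale: "bracket_term a (wscale c x) \<gamma> k \<alpha> = c * bracket_term a x \<gamma> k \<alpha>"
  unfolding bracket_term_def wscale_def by (simp add: sum_distrib_left algebra_simps)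

lemma linear_witt_bracket: "Vector_Spaces.linear wscale wscale (witt_bracket a)"
  unfolding linear_iff witt_bracket_def bracket_term_def[symmetric] using W.vector_space_axioms
  by (simp add: fun_eq_iff bracket_term_add bracket_term_wscale sum.distrib sum_distrib_left)
    (simp add: wscale_def sum_distrib_left)

lemma witt_bracket_Witt:
  assumes "a \<in> Witt" "b \<in> Witt"
  shows "witt_bracket a b \<in> Witt"
proof -
  have "supp (witt_bracket a b) \<subseteq> (\<lambda>(\<alpha>, \<beta>). \<alpha> + \<beta>) ` (supp a \<times> supp b)"
  proof
    fix \<gamma> assume "\<gamma> \<in> supp (witt_bracket a b)"
    then obtain k where "witt_bracket a b \<gamma> k \<noteq> 0" unfolding supp_def by auto
    then obtain \<alpha> where "\<alpha> \<in> supp a" "bracket_term a b \<gamma> k \<alpha> \<noteq> 0"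
      unfolding witt_bracket_def bracket_term_def[symmetric]
      by (rule sum.not_neutral_contains_not_neutral)
    then have "\<gamma> - \<alpha> \<in> supp b" unfolding supp_def using bracket_term_right_zero by blast
    with \<open>\<alpha> \<in> supp a\<close> show "\<gamma> \<in> (\<lambda>(\<alpha>, \<beta>). \<alpha> + \<beta>) ` (supp a \<times> supp b)"
      by (intro image_eqI[of _ _ "(\<alpha>, \<gamma> - \<alpha>)"]) auto
  qed
  then show ?thesis using assms unfolding Witt_def by (auto intro: finite_subset)
qed

lemma funpow_witt_bracket_Witt: "a \<in> Witt \<Longrightarrow> b \<in> Witt \<Longrightarrow> (witt_bracket a ^^ m) b \<in> Witt"
  by (induction m) (simp_all add: witt_bracket_Witt)

lemma deg_le_witt_bracket:
  assumes "deg_le lam s a" "deg_le lam t b"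
  shows "deg_le lam (s + t) (witt_bracket a b)"
  unfolding deg_le_def
proof (intro allI impI ext)
  fix \<gamma> k assume \<gamma>: "s + t < lam_deg lam \<gamma>"
  have "bracket_term a b \<gamma> k \<alpha> = 0" if "\<alpha> \<in> supp a" for \<alpha>
  proof -
    have "t < lam_deg lam (\<gamma> - \<alpha>)"
      using deg_le_supp[OF assms(1) that] \<gamma> by (simp add: lam_deg_diff)
    then show ?thesis using assms(2) unfolding deg_le_def by (blast intro: bracket_term_right_zero)
  qed
  then show "witt_bracket a b \<gamma> k = 0"
    unfolding witt_bracket_def bracket_term_def[symmetric] by (intro sum.neutral) blast
qed

lemma deg_ge_witt_bracket:
  assumes "deg_ge lam s a" "deg_ge lam t b"
  shows "deg_ge lam (s + t) (witt_bracket a b)"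
  unfolding deg_ge_def
proof (intro allI impI ext)
  fix \<gamma> k assume \<gamma>: "lam_deg lam \<gamma> < s + t"
  have "bracket_term a b \<gamma> k \<alpha> = 0" if "\<alpha> \<in> supp a" for \<alpha>
  proof -
    have "lam_deg lam (\<gamma> - \<alpha>) < t"
      using deg_ge_supp[OF assms(1) that] \<gamma> by (simp add: lam_deg_diff)
    then show ?thesis using assms(2) unfolding deg_ge_def by (blast intro: bracket_term_right_zero)
  qed
  then show "witt_bracket a b \<gamma> k = 0"
    unfolding witt_bracket_def bracket_term_def[symmetric] by (intro sum.neutral) blast
qed

lemma witt_bracket_grade_comp:
  assumes "a \<in> Witt" "deg_le lam s a" "deg_le lam t y"
  shows "witt_bracket (grade_comp lam s a) (grade_comp lam t y)
    = grade_comp lam (s + t) (witt_bracket a y)"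
proof -
  have fin: "finite (supp a)" using assms(1) unfolding Witt_def by simp
  have homog: "grade_comp lam (s + t) (witt_bracket (grade_comp lam s a) (grade_comp lam t y))
      = witt_bracket (grade_comp lam s a) (grade_comp lam t y)"
    by (intro grade_comp_eq_self deg_le_witt_bracket deg_ge_witt_bracket
        deg_le_grade_comp deg_ge_grade_comp)
  have "witt_bracket (grade_comp lam s a) (grade_comp lam t y) \<gamma> k = witt_bracket a y \<gamma> k"
    if \<gamma>: "lam_deg lam \<gamma> = s + t" for \<gamma> k
  proof -
    have "bracket_term (grade_comp lam s a) (grade_comp lam t y) \<gamma> k \<alpha> = bracket_term a y \<gamma> k \<alpha>"
      if "\<alpha> \<in> supp a" for \<alpha>
    proof (cases "lam_deg lam \<alpha> = s")
      case True
      then have "grade_comp lam s a \<alpha> = a \<alpha>" "grade_comp lam t y (\<gamma> - \<alpha>) = y (\<gamma> - \<alpha>)"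
        using \<gamma> by (simp_all add: grade_comp_def lam_deg_diff)
      then show ?thesis unfolding bracket_term_def by simp
    next
      case False
      then have "lam_deg lam \<alpha> < s" using deg_le_supp[OF assms(2) that] by simp
      then have "grade_comp lam s a \<alpha> = (\<lambda>_. 0)" "t < lam_deg lam (\<gamma> - \<alpha>)"
        using \<gamma> by (simp_all add: grade_comp_def lam_deg_diff)
      moreover have "y (\<gamma> - \<alpha>) = (\<lambda>_. 0)" using calculation(2) assms(3) unfolding deg_le_def by blast
      ultimately show ?thesis by (simp add: bracket_term_left_zero bracket_term_right_zero)
    qed
    then show ?thesis
      using witt_bracket_eq_sum[OF fin supp_grade_comp_subset] witt_bracket_eq_sum[OF fin subset_refl]
      by (metis (no_types, lifting) sum.cong)
  qed
  then show ?thesis by (subst homog[symmetric]) (auto simp: grade_comp_def fun_eq_iff)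
qed

lemma deg_le_funpow_witt_bracket:
  assumes "deg_le lam s a" "deg_le lam d b"
  shows "deg_le lam (d + int m * s) ((witt_bracket a ^^ m) b)"
proof (induction m)
  case 0 show ?case using assms(2) by simp
next
  case (Suc m)
  have "d + int (Suc m) * s = s + (d + int m * s)" by (simp add: algebra_simps)
  then show ?case using deg_le_witt_bracket[OF assms(1) Suc] by (simp only: funpow.simps(2) o_apply)
qed

lemma funpow_witt_bracket_grade_comp:
  assumes "a \<in> Witt" "deg_le lam s a" "deg_le lam d b"
  shows "(witt_bracket (grade_comp lam s a) ^^ m) (grade_comp lam d b)
    = grade_comp lam (d + int m * s) ((witt_bracket a ^^ m) b)"
proof (induction m)
  case 0 show ?case by simp
next
  case (Suc m)
  have "d + int (Suc m) * s = s + (d + int m * s)" by (simp add: algebra_simps)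
  with Suc show ?case
    using witt_bracket_grade_comp[OF assms(1,2) deg_le_funpow_witt_bracket[OF assms(2,3)]]
    by (simp only: funpow.simps(2) o_apply)
qed

lemma grade_comps_of_orbit_in_finite_span:
  assumes "a \<in> Witt" "locally_finite a" "b \<in> Witt"
  obtains T where "finite T" "\<And>t m. grade_comp lam t ((witt_bracket a ^^ m) b) \<in> W.span T"
proof -
  have "span_fin_dim (range (\<lambda>m. (witt_bracket a ^^ m) b))"
    using assms(2,3) unfolding locally_finite_def by blast
  then obtain B where B: "finite B" "B \<subseteq> range (\<lambda>m. (witt_bracket a ^^ m) b)"
      "range (\<lambda>m. (witt_bracket a ^^ m) b) \<subseteq> W.span B"
    by (rule span_fin_dim_obtain_spanning_subset)
  have "B \<subseteq> Witt" using B(2) funpow_witt_bracket_Witt[OF assms(1,3)] by blast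
  then obtain T where "finite T" "\<And>t v. v \<in> W.span B \<Longrightarrow> grade_comp lam t v \<in> W.span T"
    using grade_comps_in_finite_span[OF B(1)] by blast
  with B(3) that show ?thesis by blast
qed

lemma locally_finite_grade_comp:
  fixes a :: "('n::finite, 'k::field) witt"
  assumes "a \<in> Witt" "deg_le lam s a" "locally_finite a"
  shows "locally_finite (grade_comp lam s a)"
  unfolding locally_finite_def
proof
  fix b :: "('n, 'k) witt" assume "b \<in> Witt"
  define D where "D = lam_deg lam ` supp b"
  have "finite D" using \<open>b \<in> Witt\<close> unfolding D_def Witt_def by simp
  have "\<exists>T. finite T \<and> (\<forall>t m. grade_comp lam t ((witt_bracket a ^^ m) (grade_comp lam d b)) \<in> W.span T)"
    for d by (rule grade_comps_of_orbit_in_finite_span[OF assms(1,3) grade_comp_Witt[OF \<open>b \<in> Witt\<close>]]) blast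
  then obtain T where T: "\<And>d. finite (T d)"
    "\<And>d t m. grade_comp lam t ((witt_bracket a ^^ m) (grade_comp lam d b)) \<in> W.span (T d)"
    by metis
  have "(witt_bracket (grade_comp lam s a) ^^ m) b \<in> W.span (\<Union>d\<in>D. T d)" for m
  proof -
    have "(witt_bracket (grade_comp lam s a) ^^ m) b
        = (witt_bracket (grade_comp lam s a) ^^ m) (\<Sum>d\<in>D. grade_comp lam d b)"
      unfolding D_def sum_grade_comp[OF \<open>b \<in> Witt\<close>] ..
    also have "\<dots> = (\<Sum>d\<in>D. (witt_bracket (grade_comp lam s a) ^^ m) (grade_comp lam d b))"
      by (rule module_hom.sum[OF linear_funpow[OF linear_witt_bracket, unfolded linear_iff_module_hom]])
    also have "\<dots> = (\<Sum>d\<in>D. grade_comp lam (d + int m * s)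
        ((witt_bracket a ^^ m) (grade_comp lam d b)))"
      using funpow_witt_bracket_grade_comp[OF assms(1,2) deg_le_grade_comp]
      by (simp only: grade_comp_idem)
    also have "\<dots> \<in> W.span (\<Union>d\<in>D. T d)"
      using T(2) W.span_mono[of "T _" "\<Union>d\<in>D. T d"] by (intro W.span_sum) blast
    finally show ?thesis .
  qed
  then show "span_fin_dim (range (\<lambda>m. (witt_bracket (grade_comp lam s a) ^^ m) b))"
    unfolding span_fin_dim_iff using \<open>finite D\<close> T(1) by blast
qed

lemma deg_le_Max_lam_deg:
  assumes "a \<in> Witt"
  shows "deg_le lam (Max (lam_deg lam ` supp a)) a"
  unfolding deg_le_def
proof (intro allI impI)
  fix \<gamma> assume "Max (lam_deg lam ` supp a) < lam_deg lam \<gamma>"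
  moreover have "finite (lam_deg lam ` supp a)" using assms unfolding Witt_def by simp
  ultimately have "\<gamma> \<notin> supp a" using Max_ge not_le by blast
  then show "a \<gamma> = (\<lambda>_. 0)" unfolding supp_def by simp
qed

lemma locally_finite_lead_term:
  assumes "a \<in> Witt" "locally_finite a"
  shows "locally_finite (lead_term lam a)"
  unfolding lead_term_def using assms deg_le_Max_lam_deg by (blast intro: locally_finite_grade_comp)

lemma least_term_eq_lead_term_uminus:
  assumes "a \<in> Witt" "a \<noteq> (\<lambda>_ _. 0)"
  shows "least_term lam a = lead_term (- lam) a"
proof -
  have "supp a \<noteq> {}" using assms(2) unfolding supp_def by auto
  moreover have "finite (supp a)" using assms(1) unfolding Witt_def by simp
  ultimately have "Max (lam_deg (- lam) ` supp a) = - Min (lam_deg lam ` supp a)"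
    by (simp add: lam_deg_uminus image_image[symmetric, of uminus "lam_deg lam"])
  then show ?thesis
    unfolding least_term_def lead_term_def grade_comp_def by (simp add: lam_deg_uminus)
qed

theorem lemma2p3:
  fixes a :: "('n::finite, 'k::field_char_0) witt" and lam :: "'n \<Rightarrow> int"
  assumes "a \<in> Witt" and "a \<noteq> (\<lambda>_ _. 0)" and "locally_finite a"
  shows "locally_finite (lead_term lam a) \<and> locally_finite (least_term lam a)"
  using locally_finite_lead_term[OF assms(1,3)] least_term_eq_lead_term_uminus[OF assms(1,2)]
  by simp

end
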